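(* Let $S$ be a standard quantum entity on a finite-dimensional complex Hilbert space $\mathcal{H}$. For any two experiments $e_E,e_F$, either $e_E=e_F$ or $e_E\perp e_F$.
   Context: A spectral family of $\mathcal{H}$ is a set $E=\{E_1,\dots,E_r\}$ of pairwise orthogonal nonzero orthogonal projections with $\sum_kE_k=I$. The standard quantum entity on $\mathcal{H}$ has states $p_{\bar c}$, one for each ray $\bar c$ (generated by a unit vector $c$), experiments $e_E$, one for each spectral family $E$ (so $e_E=e_F$ iff $E=F$), outcomes $x_{E_k}$, one for each orthogonal projection $E_k$, and outcome sets $O(e_E,p_{\bar c})=\{x_{E_k}:E_k\in E,\ E_kc\neq0\}$. Experiment orthogonality: $e\perp f$ iff there is a state $p$ with $O(e,p)\cap O(f,p)=\emptyset$. *)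

theory Defs
  imports "HOL-Analysis.Analysis"
begin

text \<open>The finite-dimensional complex Hilbert space is modelled as complex^'n with 'n a
finite type (dimension CARD('n)); operators are complex matrices complex^'n^'n.\<close>

definition adjoint_mat :: "complex^'n^'n \<Rightarrow> complex^'n^'n" where
  "adjoint_mat A = (\<chi> i j. cnj (A $ j $ i))"

definition orth_proj :: "complex^'n^'n \<Rightarrow> bool" where
  "orth_proj P \<longleftrightarrow> P ** P = P \<and> adjoint_mat P = P"

definition spectral_family :: "(complex^'n^'n) set \<Rightarrow> bool" where
  "spectral_family E \<longleftrightarrow> finite E \<and> (\<forall>P\<in>E. orth_proj P \<and> P \<noteq> 0)
     \<and> (\<forall>P\<in>E. \<forall>Q\<in>E. P \<noteq> Q \<longrightarrow> P ** Q = 0) \<and> (\<Sum>P\<in>E. P) = mat 1"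

text \<open>States p_c are given by unit vectors c (the ray generated by c); the outcome set
depends only on the ray. Outcome x_P is identified with the projection P, experiment e_E
with the spectral family E.\<close>

definition outcome_set :: "(complex^'n^'n) set \<Rightarrow> complex^'n \<Rightarrow> (complex^'n^'n) set" where
  "outcome_set E c = {P \<in> E. P *v c \<noteq> 0}"

definition exp_orth :: "(complex^'n^'n) set \<Rightarrow> (complex^'n^'n) set \<Rightarrow> bool" where
  "exp_orth E F \<longleftrightarrow> (\<exists>c::complex^'n. norm c = 1 \<and> outcome_set E c \<inter> outcome_set F c = {})"

end

theory Submission
  imports Defs
begin

text \<open>Two distinct spectral families differ in some projection P, say P in E but not in F.
A unit vector c in the range of P is annihilated by every other member of E, so the only
outcome of e_E in the state c is P, which is not an outcome of e_F at all.\<close>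

lemma idempotent_matrix_fixes_unit_vector:
  fixes P :: "'a::real_normed_field^'n^'n"
  assumes "P ** P = P" and "P \<noteq> 0"
  obtains c where "norm c = 1" and "P *v c = c"
proof -
  obtain v where v: "P *v v \<noteq> 0"
    using assms(2) matrix_eq[of P 0] by auto
  define c where "c = (1 / norm (P *v v)) *\<^sub>R (P *v v)"
  have "P *v (P *v v) = P *v v"
    by (simp add: matrix_vector_mul_assoc assms(1))
  then have "P *v c = c"
    unfolding c_def using linear_scale[OF matrix_vector_mul_linear[of P]] by simp
  moreover have "norm c = 1"
    unfolding c_def using v by simp
  ultimately show thesis using that by blast
qed

lemma outcome_set_fixed_vector:
  assumes "spectral_family E" and "P \<in> E" and "P *v c = c"
  shows "outcome_set E c \<subseteq> {P}"
proof
  fix Q assume Q: "Q \<in> outcome_set E c"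
  show "Q \<in> {P}"
  proof (rule ccontr)
    assume "Q \<notin> {P}"
    then have "Q ** P = 0"
      using assms(1,2) Q unfolding spectral_family_def outcome_set_def by auto
    then have "Q *v c = 0"
      by (metis assms(3) matrix_vector_mul_assoc matrix_vector_mult_0)
    then show False
      using Q unfolding outcome_set_def by simp
  qed
qed

lemma exp_orth_sym: "exp_orth E F \<longleftrightarrow> exp_orth F E"
  unfolding exp_orth_def by (auto simp: Int_commute)

lemma exp_orth_if_mem_notin:
  assumes E: "spectral_family E" and "P \<in> E" and "P \<notin> F"
  shows "exp_orth E F"
proof -
  have "P ** P = P" and "P \<noteq> 0"
    using E \<open>P \<in> E\<close> unfolding spectral_family_def orth_proj_def by auto
  then obtain c where "norm c = 1" and "P *v c = c"
    by (rule idempotent_matrix_fixes_unit_vector)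
  then have "outcome_set E c \<subseteq> {P}"
    using outcome_set_fixed_vector[OF E \<open>P \<in> E\<close>] by blast
  then have "outcome_set E c \<inter> outcome_set F c = {}"
    using \<open>P \<notin> F\<close> unfolding outcome_set_def by blast
  then show ?thesis
    unfolding exp_orth_def using \<open>norm c = 1\<close> by blast
qed

theorem mainTheorem19:
  fixes E F :: "(complex^'n^'n) set"
  assumes "spectral_family E" and "spectral_family F"
  shows "E = F \<or> exp_orth E F"
proof (cases "E = F")
  case False
  then obtain P where "P \<in> E \<and> P \<notin> F \<or> P \<in> F \<and> P \<notin> E" by blast
  then show ?thesis
    using exp_orth_if_mem_notin[OF assms(1)] exp_orth_if_mem_notin[OF assms(2)] exp_orth_sym
    by blast
qed simp

end
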